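(* Let $G$ be a looped simple graph, $T$ a transversal of $W(G)$, and $B$ a basis of the transverse matroid $M[IAS(G)]|T$. Let $V_B=\{v\in V(G): B\cap\tau_G(v)\neq\emptyset\}$. Then there is a looped simple graph $H$ locally equivalent to $G$ and an induced isomorphism $\beta:M[IAS(G)]\to M[IAS(H)]$ such that (1) $V(G)\setminus V_B$ is a stable set of $H$, and (2) $\beta(T)=\{\phi_H(v):v\in V_B\}\cup\bigcup_{v\in V(G)\setminus V_B}\zeta_H(v)$.
   Context: A looped simple graph is a finite graph in which each vertex carries at most one loop and no two distinct vertices are joined by more than one edge. "Adjacent"/"neighbors" refer only to distinct vertices joined by a non-loop edge; $N_G(v)$ is the set of neighbors of $v$; a stable set is a set of vertices no two of which are adjacent. $A(G)$ is the $V(G)\times V(G)$ matrix over $GF(2)$ with diagonal entry $1$ exactly at looped vertices and off-diagonal entry $1$ exactly for adjacent pairs. $IAS(G)=(I\mid A(G)\mid A(G)+I)$ over $GF(2)$, rows indexed by $V(G)$; the $v$-columns of the three blocks are labelled $\phi_G(v),\chi_G(v),\psi_G(v)$. $M[IAS(G)]$ is the binary column matroid of $IAS(G)$ on $W(G)=\{\phi_G(v),\chi_G(v),\psi_G(v):v\in V(G)\}$. The vertex triple of $v$ is $\tau_G(v)=\{\phi_G(v),\chi_G(v),\psi_G(v)\}$; a transversal meets each vertex triple in exactly one element; a transverse matroid is the restriction of $M[IAS(G)]$ to a transversal. Neighborhood circuit: $\zeta_G(v)=\{\chi_G(v)\}\cup\{\phi_G(w):w\in N_G(v)\}$ if $v$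 is unlooped, and $\{\psi_G(v)\}\cup\{\phi_G(w):w\in N_G(v)\}$ if $v$ is looped. Local equivalence: $G_\ell^v$ complements the loop status of $v$; $G_s^v$ complements the adjacency status of every pair of distinct neighbors of $v$; $G_{ns}^v$ does this and also complements the loop status of every neighbor of $v$. $H$ is locally equivalent to $G$ if obtained from $G$ by a finite sequence of such operations (so $V(H)=V(G)$). Induced isomorphisms: for each such operation producing $G'$ from $G$ there is a matroid isomorphism $M[IAS(G)]\to M[IAS(G')]$ sending $\alpha_G(x)\mapsto\alpha_{G'}(x)$ for all $\alpha\in\{\phi,\chi,\psi\}$, $x\in V(G)$, except: for $G'=G_\ell^v$, $\chi_G(v)\mapsto\psi_{G'}(v)$, $\psi_G(v)\mapsto\chi_{G'}(v)$; for $G'=G_{ns}^v$ with $v$ unlooped, $\phi_G(v)\mapsto\psi_{G'}(v)$, $\psi_G(v)\mapsto\phi_{G'}(v)$, and with $v$ looped, $\phi_G(v)\mapsto\chi_{G'}(v)$, $\chi_G(v)\mapsto\phi_{G'}(v)$; for $G'=G_s^v$, the same exchange at $v$ as for $G_{ns}^v$ and in addition, for every $w\in N_G(v)$, $\chi_G(w)\mapsto\psi_{G'}(w)$, $\psi_G(w)\mapsto\chi_{G'}(w)$. An induced isomorphism $M[IAS(G)]\to M[IAS(H)]$ is a composition of such isomorphisms along a sequence of operations transforming $G$ into $H$; it maps $\tau_G(v)$ onto $\tau_H(v)$ for every $v$. *)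

theory Defs
  imports Main
begin

record 'a lgraph =
  verts :: "'a set"
  loops :: "'a set"
  adj   :: "'a \<Rightarrow> 'a \<Rightarrow> bool"

definition looped_simple_graph :: "'a lgraph \<Rightarrow> bool" where
  "looped_simple_graph G \<longleftrightarrow>
     finite (verts G) \<and> loops G \<subseteq> verts G \<and>
     (\<forall>x y. adj G x y \<longrightarrow> x \<in> verts G \<and> y \<in> verts G \<and> x \<noteq> y) \<and>
     (\<forall>x y. adj G x y \<longleftrightarrow> adj G y x)"

definition nbhd :: "'a lgraph \<Rightarrow> 'a \<Rightarrow> 'a set" where
  "nbhd G v = {w. adj G v w}"

definition stable_set :: "'a lgraph \<Rightarrow> 'a set \<Rightarrow> bool" where
  "stable_set G S \<longleftrightarrow> S \<subseteq> verts G \<and> (\<forall>x\<in>S. \<forall>y\<in>S. \<not> adj G x y)"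

datatype 'a elt = Phi 'a | Chi 'a | Psi 'a

definition W :: "'a lgraph \<Rightarrow> 'a elt set" where
  "W G = Phi ` verts G \<union> Chi ` verts G \<union> Psi ` verts G"

definition vtriple :: "'a lgraph \<Rightarrow> 'a \<Rightarrow> 'a elt set" where
  "vtriple G v = {Phi v, Chi v, Psi v}"

text \<open>Entry of the adjacency matrix A(G) over GF(2) (True = 1).\<close>
definition Amat :: "'a lgraph \<Rightarrow> 'a \<Rightarrow> 'a \<Rightarrow> bool" where
  "Amat G w v = (if w = v then v \<in> loops G else adj G w v)"

text \<open>Column of IAS(G) labelled by an element, as a GF(2)-vector indexed by V(G)
  (entries outside V(G) are 0).\<close>
definition col :: "'a lgraph \<Rightarrow> 'a elt \<Rightarrow> 'a \<Rightarrow> bool" where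
  "col G e w = (w \<in> verts G \<and>
     (case e of Phi v \<Rightarrow> w = v
              | Chi v \<Rightarrow> Amat G w v
              | Psi v \<Rightarrow> (Amat G w v \<noteq> (w = v))))"

text \<open>Independence in the binary column matroid: no nonempty subset of the
  columns sums to zero over GF(2).\<close>
definition indep :: "'a lgraph \<Rightarrow> 'a elt set \<Rightarrow> bool" where
  "indep G S \<longleftrightarrow> S \<subseteq> W G \<and>
     (\<forall>U\<subseteq>S. U \<noteq> {} \<longrightarrow> (\<exists>w. odd (card {e\<in>U. col G e w})))"

definition transversal :: "'a lgraph \<Rightarrow> 'a elt set \<Rightarrow> bool" where
  "transversal G T \<longleftrightarrow> T \<subseteq> W G \<and> (\<forall>v\<in>verts G. card (T \<inter> vtriple G v) = 1)"

definition basis_of_restr :: "'a lgraph \<Rightarrow> 'a elt set \<Rightarrow> 'a elt set \<Rightarrow> bool" where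
  "basis_of_restr G T B \<longleftrightarrow> B \<subseteq> T \<and> indep G B \<and>
     (\<forall>x\<in>T - B. \<not> indep G (insert x B))"

definition nbhd_circuit :: "'a lgraph \<Rightarrow> 'a \<Rightarrow> 'a elt set" where
  "nbhd_circuit G v = {if v \<in> loops G then Psi v else Chi v} \<union> Phi ` nbhd G v"

definition loop_comp :: "'a lgraph \<Rightarrow> 'a \<Rightarrow> 'a lgraph" where
  "loop_comp G v = G\<lparr>loops := (if v \<in> loops G then loops G - {v} else insert v (loops G))\<rparr>"

definition s_comp :: "'a lgraph \<Rightarrow> 'a \<Rightarrow> 'a lgraph" where
  "s_comp G v = G\<lparr>adj := (\<lambda>x y. adj G x y \<noteq> (x \<noteq> y \<and> adj G v x \<and> adj G v y))\<rparr>"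

definition ns_comp :: "'a lgraph \<Rightarrow> 'a \<Rightarrow> 'a lgraph" where
  "ns_comp G v = (s_comp G v)\<lparr>loops := {x \<in> verts G. (x \<in> loops G) \<noteq> adj G v x}\<rparr>"

definition swap_chi_psi :: "'a \<Rightarrow> 'a elt \<Rightarrow> 'a elt" where
  "swap_chi_psi v e = (if e = Chi v then Psi v else if e = Psi v then Chi v else e)"

definition swap_phi_psi :: "'a \<Rightarrow> 'a elt \<Rightarrow> 'a elt" where
  "swap_phi_psi v e = (if e = Phi v then Psi v else if e = Psi v then Phi v else e)"

definition swap_phi_chi :: "'a \<Rightarrow> 'a elt \<Rightarrow> 'a elt" where
  "swap_phi_chi v e = (if e = Phi v then Chi v else if e = Chi v then Phi v else e)"

definition ns_map :: "'a lgraph \<Rightarrow> 'a \<Rightarrow> 'a elt \<Rightarrow> 'a elt" where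
  "ns_map G v = (if v \<in> loops G then swap_phi_chi v else swap_phi_psi v)"

definition s_map :: "'a lgraph \<Rightarrow> 'a \<Rightarrow> 'a elt \<Rightarrow> 'a elt" where
  "s_map G v e = (case e of
      Phi x \<Rightarrow> ns_map G v e
    | Chi x \<Rightarrow> (if adj G v x then Psi x else ns_map G v e)
    | Psi x \<Rightarrow> (if adj G v x then Chi x else ns_map G v e))"

inductive local_op :: "'a lgraph \<Rightarrow> 'a lgraph \<Rightarrow> ('a elt \<Rightarrow> 'a elt) \<Rightarrow> bool" where
  op_l:  "v \<in> verts G \<Longrightarrow> local_op G (loop_comp G v) (swap_chi_psi v)"
| op_s:  "v \<in> verts G \<Longrightarrow> local_op G (s_comp G v) (s_map G v)"
| op_ns: "v \<in> verts G \<Longrightarrow> local_op G (ns_comp G v) (ns_map G v)"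

inductive induced_iso :: "'a lgraph \<Rightarrow> 'a lgraph \<Rightarrow> ('a elt \<Rightarrow> 'a elt) \<Rightarrow> bool" where
  refl: "induced_iso G G id"
| step: "induced_iso G H \<beta> \<Longrightarrow> local_op H H' f \<Longrightarrow> induced_iso G H' (f \<circ> \<beta>)"

definition locally_equivalent :: "'a lgraph \<Rightarrow> 'a lgraph \<Rightarrow> bool" where
  "locally_equivalent H G \<longleftrightarrow> (\<exists>\<beta>. induced_iso G H \<beta>)"

end

theory Submission
  imports Defs
begin

text \<open>A local operation acts on the columns of \<open>IAS(G)\<close> as an invertible row operation, so
  induced isomorphisms preserve independence. Pivots (the operations \<open>G\<^sub>n\<^sub>s\<^sup>v\<close>) move the basis
  elements onto \<open>Phi\<close>-elements one at a time, so some induced isomorphism maps \<open>B\<close> onto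
  \<open>Phi ` V\<^sub>B\<close>. Then each remaining element of \<open>T\<close> depends on \<open>Phi ` V\<^sub>B\<close>, so its column vanishes
  outside \<open>V\<^sub>B\<close>: it must be the head of the neighbourhood circuit of its vertex, all of whose
  neighbours lie in \<open>V\<^sub>B\<close>.\<close>

fun vert :: "'a elt \<Rightarrow> 'a" where
  "vert (Phi x) = x" | "vert (Chi x) = x" | "vert (Psi x) = x"

lemma W_eq: "W G = {e. vert e \<in> verts G}"
  unfolding W_def by (rule set_eqI, case_tac x) auto

lemma vtriple_eq: "vtriple G v = {e. vert e = v}"
  unfolding vtriple_def by (rule set_eqI, case_tac x) auto

lemma odd_card_filter_neq:
  assumes "finite U"
  shows "odd (card {e\<in>U. P e \<noteq> Q e}) \<longleftrightarrow> odd (card {e\<in>U. P e}) \<noteq> odd (card {e\<in>U. Q e})"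
proof -
  define A where "A = {e\<in>U. P e}"
  define B where "B = {e\<in>U. Q e}"
  have fin: "finite A" "finite B" using assms by (auto simp: A_def B_def)
  have "{e\<in>U. P e \<noteq> Q e} = (A \<union> B) - (A \<inter> B)" by (auto simp: A_def B_def)
  moreover have "card ((A \<union> B) - (A \<inter> B)) = card (A \<union> B) - card (A \<inter> B)"
    using fin by (intro card_Diff_subset) auto
  moreover have "card (A \<inter> B) \<le> card (A \<union> B)"
    using fin by (intro card_mono) auto
  moreover have "card A + card B = card (A \<union> B) + card (A \<inter> B)"
    using fin by (rule card_Un_Int)
  ultimately show ?thesis unfolding A_def[symmetric] B_def[symmetric] by presburger
qed

lemma local_op_verts: "local_op G G' f \<Longrightarrow> verts G' = verts G"
  by (induction rule: local_op.induct) (auto simp: loop_comp_def s_comp_def ns_comp_def)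

lemma local_op_looped_simple_graph:
  "local_op G G' f \<Longrightarrow> looped_simple_graph G \<Longrightarrow> looped_simple_graph G'"
  by (induction rule: local_op.induct)
     (auto simp: looped_simple_graph_def loop_comp_def s_comp_def ns_comp_def)

lemma vert_local_op: "local_op G G' f \<Longrightarrow> vert (f e) = vert e"
  by (induction rule: local_op.induct)
     (cases e; auto simp: swap_chi_psi_def s_map_def ns_map_def swap_phi_chi_def swap_phi_psi_def)+

lemma local_op_involutive: "local_op G G' f \<Longrightarrow> looped_simple_graph G \<Longrightarrow> f (f e) = e"
  by (induction rule: local_op.induct)
     (cases e; auto simp: looped_simple_graph_def swap_chi_psi_def s_map_def ns_map_def
        swap_phi_chi_def swap_phi_psi_def)+

lemma local_op_inj: "local_op G G' f \<Longrightarrow> looped_simple_graph G \<Longrightarrow> inj f"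
  by (metis injI local_op_involutive)

text \<open>On columns, every local operation (after relabelling by the induced map) adds row
  \<open>v\<close> to the rows in \<open>a\<close>; as \<open>v \<notin> a\<close>, this row operation is its own inverse.\<close>
lemma local_op_col_row_op:
  assumes "local_op G G' f" "looped_simple_graph G"
  shows "\<exists>v a. \<not> a v \<and> (\<forall>e w. col G' (f e) w \<longleftrightarrow> col G e w \<noteq> (col G e v \<and> a w))"
  using assms
proof (induction rule: local_op.induct)
  case (op_l v G)
  have "col (loop_comp G v) (swap_chi_psi v e) w \<longleftrightarrow> col G e w" for e w
    by (cases e) (auto simp: col_def Amat_def loop_comp_def swap_chi_psi_def)
  then show ?case by blast
next
  case (op_s v G)
  then have "\<not> adj G v v" and
    "col (s_comp G v) (s_map G v e) w \<longleftrightarrow> col G e w \<noteq> (col G e v \<and> adj G v w)" for e w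
    by (cases e; auto simp: looped_simple_graph_def col_def Amat_def s_map_def s_comp_def
          ns_map_def swap_phi_chi_def swap_phi_psi_def)+
  then show ?case by blast
next
  case (op_ns v G)
  then have "\<not> adj G v v" and
    "col (ns_comp G v) (ns_map G v e) w \<longleftrightarrow> col G e w \<noteq> (col G e v \<and> adj G v w)" for e w
    by (cases e; auto simp: looped_simple_graph_def col_def Amat_def ns_comp_def s_comp_def
          ns_map_def swap_phi_chi_def swap_phi_psi_def)+
  then show ?case by blast
qed

definition cols_sum_zero :: "'a lgraph \<Rightarrow> 'a elt set \<Rightarrow> bool" where
  "cols_sum_zero G U \<longleftrightarrow> (\<forall>w. even (card {e\<in>U. col G e w}))"

lemma finite_W: "looped_simple_graph G \<Longrightarrow> finite (W G)"
  by (simp add: looped_simple_graph_def W_def)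

lemma indep_iff_no_zero_sum:
  "indep G S \<longleftrightarrow> S \<subseteq> W G \<and> (\<forall>U\<subseteq>S. U \<noteq> {} \<longrightarrow> \<not> cols_sum_zero G U)"
  unfolding indep_def cols_sum_zero_def by auto

lemma even_card_row_op:
  assumes "finite U" and "\<And>e w. c' e w \<longleftrightarrow> c e w \<noteq> (c e v \<and> a w)"
    and "\<forall>w. even (card {e\<in>U. c e w})"
  shows "even (card {e\<in>U. c' e w})"
proof (cases "a w")
  case True
  then have "{e\<in>U. c' e w} = {e\<in>U. c e w \<noteq> c e v}" using assms(2) by auto
  then show ?thesis using odd_card_filter_neq[OF assms(1), of "\<lambda>e. c e w" "\<lambda>e. c e v"] assms(3)
    by auto
next
  case False
  then have "{e\<in>U. c' e w} = {e\<in>U. c e w}" using assms(2) by auto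
  then show ?thesis using assms(3) by auto
qed

lemma cols_sum_zero_local_op:
  assumes "local_op G G' f" "looped_simple_graph G" "finite U"
  shows "cols_sum_zero G' (f ` U) \<longleftrightarrow> cols_sum_zero G U"
proof -
  obtain v a where "\<not> a v" and row_op: "\<And>e w. col G' (f e) w \<longleftrightarrow> col G e w \<noteq> (col G e v \<and> a w)"
    using local_op_col_row_op[OF assms(1,2)] by blast
  then have row_op_inv: "col G e w \<longleftrightarrow> col G' (f e) w \<noteq> (col G' (f e) v \<and> a w)" for e w
    by auto
  have "inj_on f U" using local_op_inj[OF assms(1,2)] by (meson inj_on_subset subset_UNIV)
  have card_eq: "card {e\<in>f ` U. col G' e w} = card {e\<in>U. col G' (f e) w}" for w
  proof -
    have "{e\<in>f ` U. col G' e w} = f ` {e\<in>U. col G' (f e) w}" by auto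
    then show ?thesis using \<open>inj_on f U\<close> by (simp add: card_image inj_on_subset)
  qed
  have "(\<forall>w. even (card {e\<in>U. col G' (f e) w})) \<longleftrightarrow> (\<forall>w. even (card {e\<in>U. col G e w}))"
    using even_card_row_op[OF assms(3), of "\<lambda>e w. col G' (f e) w" "\<lambda>e w. col G e w", OF row_op]
      even_card_row_op[OF assms(3), of "\<lambda>e w. col G e w" "\<lambda>e w. col G' (f e) w", OF row_op_inv]
    by blast
  then show ?thesis unfolding cols_sum_zero_def card_eq .
qed

lemma indep_local_op:
  assumes "local_op G G' f" "looped_simple_graph G"
  shows "indep G' (f ` S) \<longleftrightarrow> indep G S"
proof -
  have "f ` S \<subseteq> W G' \<longleftrightarrow> S \<subseteq> W G"
    using vert_local_op[OF assms(1)] local_op_verts[OF assms(1)] by (auto simp: W_eq)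
  moreover have "(\<forall>U\<subseteq>f ` S. U \<noteq> {} \<longrightarrow> \<not> cols_sum_zero G' U) \<longleftrightarrow>
                 (\<forall>U\<subseteq>S. U \<noteq> {} \<longrightarrow> \<not> cols_sum_zero G U)" if "S \<subseteq> W G"
    using cols_sum_zero_local_op[OF assms] finite_subset[OF _ finite_subset[OF that finite_W[OF assms(2)]]]
    unfolding all_subset_image by auto
  ultimately show ?thesis unfolding indep_iff_no_zero_sum by blast
qed

lemma induced_iso_looped_simple_graph:
  "induced_iso G H \<beta> \<Longrightarrow> looped_simple_graph G \<Longrightarrow> looped_simple_graph H"
  by (induction rule: induced_iso.induct) (auto intro: local_op_looped_simple_graph)

lemma induced_iso_verts: "induced_iso G H \<beta> \<Longrightarrow> verts H = verts G"
  by (induction rule: induced_iso.induct) (auto dest: local_op_verts)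

lemma vert_induced_iso: "induced_iso G H \<beta> \<Longrightarrow> vert (\<beta> e) = vert e"
  by (induction rule: induced_iso.induct) (simp_all add: vert_local_op)

lemma indep_induced_iso:
  "induced_iso G H \<beta> \<Longrightarrow> looped_simple_graph G \<Longrightarrow> indep H (\<beta> ` S) \<longleftrightarrow> indep G S"
proof (induction rule: induced_iso.induct)
  case (step G H \<beta> H' f)
  have "indep H' (f ` \<beta> ` S) \<longleftrightarrow> indep H (\<beta> ` S)"
    using indep_local_op step induced_iso_looped_simple_graph by blast
  then show ?case using step.IH step.prems by (simp add: image_comp)
qed simp

definition circuit_head :: "'a lgraph \<Rightarrow> 'a \<Rightarrow> 'a elt" where
  "circuit_head G v = (if v \<in> loops G then Psi v else Chi v)"

lemma nbhd_circuit_eq: "nbhd_circuit G v = insert (circuit_head G v) (Phi ` nbhd G v)"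
  unfolding nbhd_circuit_def circuit_head_def by auto

lemma col_Phi: "col G (Phi u) w \<longleftrightarrow> w \<in> verts G \<and> w = u"
  by (simp add: col_def)

lemma circuit_head_neq_Phi: "circuit_head G v \<noteq> Phi u"
  by (simp add: circuit_head_def)

lemma col_circuit_head:
  "looped_simple_graph G \<Longrightarrow> col G (circuit_head G v) w \<longleftrightarrow> adj G w v"
  by (auto simp: looped_simple_graph_def circuit_head_def col_def Amat_def)

lemma col_own_vertex:
  assumes "v \<in> verts G" "vert c = v"
  shows "\<not> col G c v \<longleftrightarrow> c = circuit_head G v"
  using assms by (cases c) (auto simp: circuit_head_def col_def Amat_def)

lemma cols_sum_zero_nbhd_circuit:
  assumes "looped_simple_graph G"
  shows "cols_sum_zero G (nbhd_circuit G v)"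
proof -
  have "{e\<in>nbhd_circuit G v. col G e w} = (if adj G w v then {circuit_head G v, Phi w} else {})" for w
    using assms unfolding looped_simple_graph_def
    by (auto simp: nbhd_circuit_eq nbhd_def col_Phi col_circuit_head[OF assms] circuit_head_neq_Phi)
  then show ?thesis by (simp add: cols_sum_zero_def circuit_head_neq_Phi)
qed

lemma indep_nbhd_not_phi:
  assumes "looped_simple_graph G" "indep G S" "circuit_head G v \<in> S"
  obtains u where "u \<in> nbhd G v" "Phi u \<notin> S"
proof -
  have "\<not> nbhd_circuit G v \<subseteq> S"
    using assms(2) cols_sum_zero_nbhd_circuit[OF assms(1), of v] unfolding indep_iff_no_zero_sum
    by (metis empty_not_insert nbhd_circuit_eq)
  then show ?thesis using that assms(3) by (auto simp: nbhd_circuit_eq)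
qed

lemma ns_map_other_vertex: "vert e \<noteq> u \<Longrightarrow> ns_map G u e = e"
  by (cases e) (auto simp: ns_map_def swap_phi_chi_def swap_phi_psi_def)

lemma ns_map_to_Phi:
  "vert e = v \<Longrightarrow> e \<noteq> Phi v \<Longrightarrow> e \<noteq> circuit_head G v \<Longrightarrow> ns_map G v e = Phi v"
  by (cases e) (auto simp: ns_map_def swap_phi_chi_def swap_phi_psi_def circuit_head_def split: if_splits)

lemma circuit_head_ns_comp_neighbour:
  "looped_simple_graph G \<Longrightarrow> adj G u v \<Longrightarrow> circuit_head (ns_comp G u) v \<noteq> circuit_head G v"
  by (auto simp: looped_simple_graph_def circuit_head_def ns_comp_def s_comp_def)

definition non_phi :: "('a elt \<Rightarrow> 'a elt) \<Rightarrow> 'a elt set \<Rightarrow> 'a elt set" where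
  "non_phi \<beta> B = {b\<in>B. \<beta> b \<noteq> Phi (vert b)}"

lemma non_phi_ns_map: "non_phi (ns_map G u \<circ> \<beta>) B \<subseteq> non_phi \<beta> B \<union> {b\<in>B. \<beta> b = Phi u}"
  by (auto simp: non_phi_def ns_map_other_vertex)

lemma non_phi_pivot_non_head:
  assumes "induced_iso G0 G \<beta>" "B \<subseteq> W G0" "inj_on vert B"
    and b: "b \<in> non_phi \<beta> B" "\<beta> b \<noteq> circuit_head G (vert b)"
  shows "induced_iso G0 (ns_comp G (vert b)) (ns_map G (vert b) \<circ> \<beta>)"
    and "non_phi (ns_map G (vert b) \<circ> \<beta>) B \<subset> non_phi \<beta> B"
proof -
  have "vert b \<in> verts G"
    using assms(1,2) b(1) induced_iso_verts by (fastforce simp: non_phi_def W_eq)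
  then show "induced_iso G0 (ns_comp G (vert b)) (ns_map G (vert b) \<circ> \<beta>)"
    by (rule induced_iso.step[OF assms(1) op_ns])
  have "x = b" if "x \<in> B" "\<beta> x = Phi (vert b)" for x
  proof -
    have "vert x = vert b" using that(2) vert_induced_iso[OF assms(1), of x] by simp
    then show ?thesis using inj_onD[OF assms(3)] that(1) b(1) by (simp add: non_phi_def)
  qed
  then have "{x\<in>B. \<beta> x = Phi (vert b)} = {}" using b(1) by (auto simp: non_phi_def)
  moreover have "ns_map G (vert b) (\<beta> b) = Phi (vert b)"
    using b vert_induced_iso[OF assms(1)] by (intro ns_map_to_Phi) (auto simp: non_phi_def)
  ultimately show "non_phi (ns_map G (vert b) \<circ> \<beta>) B \<subset> non_phi \<beta> B"
    using non_phi_ns_map[of G "vert b" \<beta> B] b(1) by (auto simp: non_phi_def)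
qed

text \<open>If \<open>\<beta> b\<close> is the head of the neighbourhood circuit of its vertex \<open>v\<close>, independence of
  \<open>\<beta> ` B\<close> provides a neighbour \<open>u\<close> with \<open>Phi u \<notin> \<beta> ` B\<close>; pivoting on \<open>u\<close> toggles the loop
  at \<open>v\<close> and leaves the rest of \<open>\<beta> ` B\<close> fixed, after which a pivot on \<open>v\<close> sends \<open>\<beta> b\<close>
  to \<open>Phi v\<close>.\<close>
lemma non_phi_decrease:
  assumes "looped_simple_graph G0" "indep G0 B" "inj_on vert B"
    and \<beta>: "induced_iso G0 G \<beta>" and b: "b \<in> non_phi \<beta> B"
  obtains G' \<beta>' where "induced_iso G0 G' \<beta>'" "non_phi \<beta>' B \<subset> non_phi \<beta> B"
proof (cases "\<beta> b = circuit_head G (vert b)")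
  case False
  have "B \<subseteq> W G0" using assms(2) by (simp add: indep_def)
  then show ?thesis using non_phi_pivot_non_head[OF \<beta> _ assms(3) b False] that by blast
next
  case True
  have G: "looped_simple_graph G" using \<beta> assms(1) by (rule induced_iso_looped_simple_graph)
  have "indep G (\<beta> ` B)" using indep_induced_iso[OF \<beta> assms(1)] assms(2) by simp
  moreover have "\<beta> b \<in> \<beta> ` B" using b by (simp add: non_phi_def)
  ultimately obtain u where u: "u \<in> nbhd G (vert b)" "Phi u \<notin> \<beta> ` B"
    using indep_nbhd_not_phi[OF G] True by metis
  define \<beta>1 where "\<beta>1 = ns_map G u \<circ> \<beta>"
  have "u \<in> verts G" "u \<noteq> vert b"
    using u(1) G by (auto simp: nbhd_def looped_simple_graph_def)
  have \<beta>1: "induced_iso G0 (ns_comp G u) \<beta>1"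
    unfolding \<beta>1_def using \<open>u \<in> verts G\<close> by (rule induced_iso.step[OF \<beta> op_ns])
  have "\<beta>1 b = \<beta> b"
    unfolding \<beta>1_def using \<open>u \<noteq> vert b\<close> vert_induced_iso[OF \<beta>] by (simp add: ns_map_other_vertex)
  moreover have "non_phi \<beta>1 B \<subseteq> non_phi \<beta> B"
    unfolding \<beta>1_def using non_phi_ns_map[of G u \<beta> B] u(2) by force
  moreover have "circuit_head (ns_comp G u) (vert b) \<noteq> \<beta> b"
    using circuit_head_ns_comp_neighbour[OF G] u(1) G True
    by (auto simp: nbhd_def looped_simple_graph_def)
  ultimately have "b \<in> non_phi \<beta>1 B" "\<beta>1 b \<noteq> circuit_head (ns_comp G u) (vert b)"
    using b by (auto simp: non_phi_def)
  moreover have "B \<subseteq> W G0" using assms(2) by (simp add: indep_def)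
  ultimately show ?thesis
    using non_phi_pivot_non_head[OF \<beta>1 _ assms(3)] \<open>non_phi \<beta>1 B \<subseteq> non_phi \<beta> B\<close> that
    by (meson psubset_subset_trans)
qed

lemma exists_induced_iso_onto_Phi:
  assumes "looped_simple_graph G" "indep G B" "inj_on vert B"
  obtains H \<beta> where "induced_iso G H \<beta>" "\<forall>b\<in>B. \<beta> b = Phi (vert b)"
proof -
  have fin: "finite B" using assms(2) finite_W[OF assms(1)] finite_subset by (auto simp: indep_def)
  have "\<exists>H \<beta>. induced_iso G H \<beta> \<and> non_phi \<beta> B = {}" if "induced_iso G G' \<beta>'" for G' \<beta>'
    using that
  proof (induction "card (non_phi \<beta>' B)" arbitrary: G' \<beta>' rule: less_induct)
    case less
    show ?case
    proof (cases "non_phi \<beta>' B = {}")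
      case False
      then obtain G'' \<beta>'' where "induced_iso G G'' \<beta>''" "non_phi \<beta>'' B \<subset> non_phi \<beta>' B"
        using non_phi_decrease[OF assms less.prems] by blast
      moreover have "finite (non_phi \<beta>' B)" using fin by (simp add: non_phi_def)
      ultimately show ?thesis using less.hyps psubset_card_mono by blast
    qed (use less.prems in blast)
  qed
  then show ?thesis using that induced_iso.refl by (fastforce simp: non_phi_def)
qed

lemma cols_sum_zero_insert_Phi:
  assumes "U \<subseteq> insert c (Phi ` V)" "U \<noteq> {}" "cols_sum_zero H U" "V \<subseteq> verts H"
  shows "c \<in> U" and "col H c w \<Longrightarrow> w \<in> V"
proof -
  show "c \<in> U"
  proof (rule ccontr)
    assume "c \<notin> U"
    then have "U \<subseteq> Phi ` V" using assms(1) by auto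
    then obtain u where u: "Phi u \<in> U" "u \<in> V" using assms(2) by auto
    have "{x\<in>U. col H x u} = {Phi u}"
      using \<open>U \<subseteq> Phi ` V\<close> u assms(4) by (auto simp: col_Phi)
    moreover have "even (card {x\<in>U. col H x u})" using assms(3) by (simp add: cols_sum_zero_def)
    ultimately show False by simp
  qed
  assume cw: "col H c w"
  show "w \<in> V"
  proof (rule ccontr)
    assume "w \<notin> V"
    then have "{x\<in>U. col H x w} = {c}"
      using assms(1) \<open>c \<in> U\<close> cw by (auto simp: col_Phi)
    moreover have "even (card {x\<in>U. col H x w})" using assms(3) by (simp add: cols_sum_zero_def)
    ultimately show False by simp
  qed
qed

text \<open>An element of the triple of a vertex \<open>v \<notin> V\<close> that depends on \<open>Phi ` V\<close> has its column
  supported on \<open>V\<close>; its zero entry at \<open>v\<close> forces it to be the head of the neighbourhood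
  circuit of \<open>v\<close>.\<close>
lemma dependent_insert_Phi:
  assumes H: "looped_simple_graph H" and "V \<subseteq> verts H" "v \<in> verts H" "v \<notin> V" "vert c = v"
    and dep: "\<not> indep H (insert c (Phi ` V))"
  shows "c = circuit_head H v" and "nbhd H v \<subseteq> V"
proof -
  have "insert c (Phi ` V) \<subseteq> W H" using assms(2-5) by (auto simp: W_eq)
  then obtain U where U: "U \<subseteq> insert c (Phi ` V)" "U \<noteq> {}" "cols_sum_zero H U"
    using dep by (auto simp: indep_iff_no_zero_sum)
  note supp = cols_sum_zero_insert_Phi[OF U assms(2)]
  show head: "c = circuit_head H v"
    using col_own_vertex[OF assms(3,5)] supp(2)[of v] assms(4) by blast
  show "nbhd H v \<subseteq> V"
  proof
    fix w assume "w \<in> nbhd H v"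
    then have "adj H w v" using H by (auto simp: nbhd_def looped_simple_graph_def)
    then have "col H c w" using col_circuit_head[OF H] head by simp
    then show "w \<in> V" by (rule supp(2))
  qed
qed

lemma transversal_bij_vert:
  assumes "transversal G T"
  shows "bij_betw vert T (verts G)"
proof -
  have T: "T \<subseteq> W G" "\<And>v. v \<in> verts G \<Longrightarrow> card (T \<inter> {e. vert e = v}) = 1"
    using assms by (auto simp: transversal_def vtriple_eq)
  have single: "\<exists>x. T \<inter> {e. vert e = v} = {x}" if "v \<in> verts G" for v
    using T(2)[OF that] by (metis card_1_singletonE)
  have "inj_on vert T"
  proof (rule inj_onI)
    fix e e' assume e: "e \<in> T" "e' \<in> T" "vert e = vert e'"
    then have "vert e \<in> verts G" using T(1) by (auto simp: W_eq)
    then obtain x where x: "T \<inter> {d. vert d = vert e} = {x}" using single by blast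
    have "e \<in> T \<inter> {d. vert d = vert e}" "e' \<in> T \<inter> {d. vert d = vert e}" using e by auto
    then show "e = e'" unfolding x by simp
  qed
  moreover have "vert ` T = verts G"
  proof
    show "vert ` T \<subseteq> verts G" using T(1) by (auto simp: W_eq)
    show "verts G \<subseteq> vert ` T"
    proof
      fix v assume "v \<in> verts G"
      then obtain x where "T \<inter> {e. vert e = v} = {x}" using single by blast
      then have "x \<in> T \<inter> {e. vert e = v}" by simp
      then show "v \<in> vert ` T" by blast
    qed
  qed
  ultimately show ?thesis by (simp add: bij_betw_def)
qed

lemma transversal_vert_image:
  assumes "transversal G T" "B \<subseteq> T"
  shows "{v \<in> verts G. B \<inter> vtriple G v \<noteq> {}} = vert ` B"
    and "vert ` (T - B) = verts G - vert ` B"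
proof -
  have "inj_on vert T" "vert ` T = verts G"
    using transversal_bij_vert[OF assms(1)] by (auto simp: bij_betw_def)
  then show "vert ` (T - B) = verts G - vert ` B"
    using inj_on_image_set_diff[OF _ Diff_subset assms(2)] by metis
  have "vert ` B \<subseteq> verts G" using \<open>vert ` T = verts G\<close> assms(2) by blast
  then show "{v \<in> verts G. B \<inter> vtriple G v \<noteq> {}} = vert ` B" by (auto simp: vtriple_eq)
qed

lemma induced_iso_non_basis:
  assumes G: "looped_simple_graph G" and T: "transversal G T" and B: "basis_of_restr G T B"
    and \<beta>: "induced_iso G H \<beta>" "\<forall>b\<in>B. \<beta> b = Phi (vert b)" and e: "e \<in> T - B"
  shows "\<beta> e = circuit_head H (vert e)" and "nbhd H (vert e) \<subseteq> vert ` B"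
proof -
  have BT: "B \<subseteq> T" and "\<not> indep G (insert e B)" using B e by (auto simp: basis_of_restr_def)
  then have dep: "\<not> indep H (insert (\<beta> e) (Phi ` vert ` B))"
    using indep_induced_iso[OF \<beta>(1) G, of "insert e B"] \<beta>(2) by (simp add: image_image)
  have "vert ` T = verts H" "inj_on vert T"
    using transversal_bij_vert[OF T] induced_iso_verts[OF \<beta>(1)] by (auto simp: bij_betw_def)
  then have "vert ` B \<subseteq> verts H" "vert e \<in> verts H" "vert e \<notin> vert ` B"
    using BT e by (auto simp: inj_on_image_mem_iff)
  then show "\<beta> e = circuit_head H (vert e)" "nbhd H (vert e) \<subseteq> vert ` B"
    using dependent_insert_Phi[OF induced_iso_looped_simple_graph[OF \<beta>(1) G] _ _ _ _ dep]
      vert_induced_iso[OF \<beta>(1), of e] by simp_all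
qed

lemma Un_nbhd_circuits:
  assumes "\<forall>v\<in>S. nbhd H v \<subseteq> V"
  shows "Phi ` V \<union> (\<Union>v\<in>S. nbhd_circuit H v) = Phi ` V \<union> circuit_head H ` S"
  using assms by (auto simp: nbhd_circuit_eq)

theorem theorem4p3:
  fixes G :: "'a lgraph" and T B :: "'a elt set"
  assumes "looped_simple_graph G"
    and "transversal G T"
    and "basis_of_restr G T B"
  defines "VB \<equiv> {v \<in> verts G. B \<inter> vtriple G v \<noteq> {}}"
  shows "\<exists>H \<beta>. looped_simple_graph H \<and> locally_equivalent H G \<and> induced_iso G H \<beta> \<and>
           stable_set H (verts G - VB) \<and>
           \<beta> ` T = Phi ` VB \<union> (\<Union>v\<in>verts G - VB. nbhd_circuit H v)"
proof -
  have BT: "B \<subseteq> T" "indep G B" using assms(3) by (auto simp: basis_of_restr_def)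
  have "inj_on vert B"
    using transversal_bij_vert[OF assms(2)] BT(1) bij_betw_imp_inj_on inj_on_subset by blast
  then obtain H \<beta> where \<beta>: "induced_iso G H \<beta>" "\<forall>b\<in>B. \<beta> b = Phi (vert b)"
    using exists_induced_iso_onto_Phi[OF assms(1) BT(2)] by blast
  note non_basis = induced_iso_non_basis[OF assms(1-3) \<beta>]
  have VB: "VB = vert ` B"
    unfolding VB_def using assms(2) BT(1) by (rule transversal_vert_image(1))
  have rest: "vert ` (T - B) = verts G - VB"
    unfolding VB using assms(2) BT(1) by (rule transversal_vert_image(2))
  have nb: "\<forall>v\<in>verts G - VB. nbhd H v \<subseteq> VB"
    using non_basis(2) unfolding rest[symmetric] unfolding VB by blast
  have "\<beta> ` T = \<beta> ` B \<union> \<beta> ` (T - B)" using BT(1) by blast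
  also have "\<beta> ` B = Phi ` VB" using \<beta>(2) VB by (auto simp: image_image)
  also have "\<beta> ` (T - B) = circuit_head H ` vert ` (T - B)"
    using non_basis(1) by (auto simp: image_image)
  also have "\<dots> = circuit_head H ` (verts G - VB)" using rest by simp
  finally have "\<beta> ` T = Phi ` VB \<union> (\<Union>v\<in>verts G - VB. nbhd_circuit H v)"
    using Un_nbhd_circuits[OF nb] by simp
  moreover have "stable_set H (verts G - VB)"
    using nb induced_iso_verts[OF \<beta>(1)] by (fastforce simp: stable_set_def nbhd_def)
  ultimately show ?thesis
    using \<beta>(1) induced_iso_looped_simple_graph[OF \<beta>(1) assms(1)] by (auto simp: locally_equivalent_def)
qed

end
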